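(* Consider, for fixed iteration $t$ and entry, the problem $$\textbf{P3}:\ \min_{b>0,\ \beta_1,\dots,\beta_U\in\{0,1\}} R(b,\beta)=\frac{L\sigma^2}{2\big(\sum_{i=1}^U\beta_iK_ib\big)^2}+\frac{\sum_{i=1}^UK_i\rho_1(1-\beta_i)}{2LK}$$ subject to $\big|\frac{\beta_iK_ib}{h_i}\big|^2(|w|+\eta)^2\le P_i^{\max}$ for all $i$ (with $R=+\infty$ if all $\beta_i=0$). For $k=1,\dots,U$ let $$b^{(k)}=\Big|\frac{\sqrt{P_k^{\max}}\,h_k}{K_k(|w|+\eta)}\Big|,\qquad \beta^{(k)}_i=\begin{cases}1,& \big|\frac{K_ib^{(k)}}{h_i}\big|^2(|w|+\eta)^2\le P_i^{\max},\\0,&\text{otherwise,}\end{cases}$$ and $\mathcal{S}=\{(b^{(k)},\beta^{(k)}):k=1,\dots,U\}$. Then $\textbf{P3}$ has an optimal solution belonging to $\mathcal{S}$; i.e. $\min_{\textbf{P3}}R=\min_{(b,\beta)\in\mathcal{S}}R(b,\beta)$.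
   Context: Parameters: $U$ workers; $K_i>0$ is the number of samples at worker $i$, $K=\sum_iK_i$; $h_i\neq0$ the channel gain of worker $i$; $P_i^{\max}>0$ its maximum transmit power; $w$ the current (previous-iteration) global parameter entry known to the server and $\eta\ge0$ with $|w|+\eta>0$ a bound on the local update magnitude; $L,\rho_1,\sigma^2>0$ are constants (smoothness constant, gradient-bound constant, noise variance). $b$ is the common power scaling factor and $\beta_i$ indicates whether worker $i$ is selected. Note $\beta^{(k)}_i=1$ exactly when $b^{(k)}\le b^{(i)}$. *)

theory Defs
  imports Complex_Main "HOL-Library.Extended_Real"
begin

text \<open>Workers are indexed by 1..U. Ks i = K_i (number of samples), h i = channel gain
  (complex, nonzero), P i = P_i^max, sigma = noise standard deviation (sigma^2 the variance).\<close>

definition R3 :: "real \<Rightarrow> real \<Rightarrow> real \<Rightarrow> nat \<Rightarrow> (nat \<Rightarrow> nat) \<Rightarrow> real \<Rightarrow> (nat \<Rightarrow> real) \<Rightarrow> ereal" where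
  "R3 L \<rho>1 \<sigma> U Ks b \<beta> =
     (if (\<forall>i\<in>{1..U}. \<beta> i = 0) then \<infinity>
      else ereal (L * \<sigma>\<^sup>2 / (2 * (\<Sum>i=1..U. \<beta> i * real (Ks i) * b)\<^sup>2)
                  + (\<Sum>i=1..U. real (Ks i) * \<rho>1 * (1 - \<beta> i))
                    / (2 * L * real (\<Sum>i=1..U. Ks i))))"

definition feasible3 :: "nat \<Rightarrow> (nat \<Rightarrow> nat) \<Rightarrow> (nat \<Rightarrow> complex) \<Rightarrow> (nat \<Rightarrow> real) \<Rightarrow> real \<Rightarrow> real
    \<Rightarrow> real \<Rightarrow> (nat \<Rightarrow> real) \<Rightarrow> bool" where
  "feasible3 U Ks h P w \<eta> b \<beta> \<longleftrightarrow>
     b > 0 \<and> (\<forall>i\<in>{1..U}. \<beta> i \<in> {0, 1} \<and>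
        (cmod (complex_of_real (\<beta> i * real (Ks i) * b) / h i))\<^sup>2 * (\<bar>w\<bar> + \<eta>)\<^sup>2 \<le> P i)"

definition bk :: "(nat \<Rightarrow> nat) \<Rightarrow> (nat \<Rightarrow> complex) \<Rightarrow> (nat \<Rightarrow> real) \<Rightarrow> real \<Rightarrow> real \<Rightarrow> nat \<Rightarrow> real" where
  "bk Ks h P w \<eta> k =
     cmod (complex_of_real (sqrt (P k)) * h k / complex_of_real (real (Ks k) * (\<bar>w\<bar> + \<eta>)))"

definition betak :: "(nat \<Rightarrow> nat) \<Rightarrow> (nat \<Rightarrow> complex) \<Rightarrow> (nat \<Rightarrow> real) \<Rightarrow> real \<Rightarrow> real \<Rightarrow> nat \<Rightarrow> nat \<Rightarrow> real" where
  "betak Ks h P w \<eta> k i =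
     (if (cmod (complex_of_real (real (Ks i) * bk Ks h P w \<eta> k) / h i))\<^sup>2 * (\<bar>w\<bar> + \<eta>)\<^sup>2 \<le> P i
      then 1 else 0)"

end

theory Submission
  imports Defs
begin

text \<open>For a selected worker i the power constraint says exactly that the scaling factor b is
  at most that worker's threshold b(i), so a feasible point selects only workers whose threshold is
  at least b. Among these take the worker k with the smallest threshold: raising b to b(k) keeps
  the selection feasible and allows selecting every worker with threshold at least b(k), which is
  the selection beta(k). Since the objective decreases when b grows and when more workers are
  selected, the candidate k is at least as good, and the best of the U candidates is optimal.\<close>

lemma power_constraint_iff:
  fixes K a P x :: real and g :: complex
  assumes "K > 0" "g \<noteq> 0" "P \<ge> 0" "a > 0" "x \<ge> 0"
  shows "(cmod (complex_of_real (K * x) / g))\<^sup>2 * a\<^sup>2 \<le> P \<longleftrightarrow> x \<le> sqrt P * cmod g / (K * a)"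
proof -
  have g: "cmod g > 0" using assms by simp
  have "(cmod (complex_of_real (K * x) / g))\<^sup>2 * a\<^sup>2 = (K * x * a / cmod g)\<^sup>2"
    using assms by (simp add: norm_divide power_divide power_mult_distrib del: of_real_mult)
  also have "\<dots> \<le> P \<longleftrightarrow> K * x * a / cmod g \<le> sqrt P"
    using assms g by (metis abs_of_nonneg divide_nonneg_pos mult_nonneg_nonneg less_imp_le
        real_le_rsqrt sqrt_ge_absD)
  also have "\<dots> \<longleftrightarrow> x \<le> sqrt P * cmod g / (K * a)"
    using assms g by (simp add: field_simps)
  finally show ?thesis .
qed

lemma R3_antimono:
  assumes "L \<ge> 0" "\<rho>1 \<ge> 0" "\<forall>i\<in>{1..U}. Ks i > 0"
    and "0 < b" "b \<le> b'" and \<beta>: "\<forall>i\<in>{1..U}. 0 \<le> \<beta> i \<and> \<beta> i \<le> \<beta>' i"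
  shows "R3 L \<rho>1 \<sigma> U Ks b' \<beta>' \<le> R3 L \<rho>1 \<sigma> U Ks b \<beta>"
proof (cases "\<forall>i\<in>{1..U}. \<beta> i = 0")
  case True
  then show ?thesis by (simp add: R3_def)
next
  case False
  then obtain j where j: "j \<in> {1..U}" "\<beta> j \<noteq> 0" by blast
  have \<beta>'_nonzero: "\<not> (\<forall>i\<in>{1..U}. \<beta>' i = 0)"
    using j \<beta> by (metis order.antisym)
  define S where "S = (\<Sum>i=1..U. \<beta> i * real (Ks i) * b)"
  define S' where "S' = (\<Sum>i=1..U. \<beta>' i * real (Ks i) * b')"
  have "\<beta> j > 0" using j \<beta> by force
  then have "0 < \<beta> j * real (Ks j) * b"
    using j(1) assms(3,4) by simp
  also have "\<dots> \<le> S"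
    unfolding S_def using assms(4) \<beta> j(1) by (intro member_le_sum) auto
  finally have S_pos: "S > 0" .
  have "S \<le> S'"
    unfolding S_def S'_def using \<beta> assms(4,5) by (intro sum_mono mult_mono) (fastforce intro: order_trans)+
  then have first: "L * \<sigma>\<^sup>2 / (2 * S'\<^sup>2) \<le> L * \<sigma>\<^sup>2 / (2 * S\<^sup>2)"
    using S_pos assms(1) by (intro divide_left_mono mult_pos_pos power_mono) auto
  have second: "(\<Sum>i=1..U. real (Ks i) * \<rho>1 * (1 - \<beta>' i)) / (2 * L * real (\<Sum>i=1..U. Ks i))
      \<le> (\<Sum>i=1..U. real (Ks i) * \<rho>1 * (1 - \<beta> i)) / (2 * L * real (\<Sum>i=1..U. Ks i))"
    using \<beta> assms(1,2) by (intro divide_right_mono sum_mono mult_left_mono) (auto simp: sum_nonneg)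
  show ?thesis
    unfolding R3_def S_def[symmetric] S'_def[symmetric]
    using False \<beta>'_nonzero add_mono[OF first second] by simp
qed

locale p3_instance =
  fixes U :: nat and Ks :: "nat \<Rightarrow> nat" and h :: "nat \<Rightarrow> complex" and P :: "nat \<Rightarrow> real"
    and w \<eta> :: real
  assumes workers: "U \<ge> 1"
    and Ks_pos: "\<forall>i\<in>{1..U}. Ks i > 0"
    and h_nonzero: "\<forall>i\<in>{1..U}. h i \<noteq> 0"
    and P_pos: "\<forall>i\<in>{1..U}. P i > 0"
    and amplitude_pos: "\<bar>w\<bar> + \<eta> > 0"
begin

abbreviation "b_cand \<equiv> bk Ks h P w \<eta>"
abbreviation "\<beta>_cand \<equiv> betak Ks h P w \<eta>"

lemma b_cand_eq:
  assumes "i \<in> {1..U}"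
  shows "b_cand i = sqrt (P i) * cmod (h i) / (real (Ks i) * (\<bar>w\<bar> + \<eta>))"
  using assms P_pos amplitude_pos unfolding bk_def
  by (simp add: norm_divide norm_mult abs_mult less_imp_le del: of_real_mult)

lemma b_cand_pos: "i \<in> {1..U} \<Longrightarrow> b_cand i > 0"
  using Ks_pos h_nonzero P_pos amplitude_pos by (simp add: b_cand_eq)

lemma power_constraint_iff_le_b_cand:
  assumes "i \<in> {1..U}" "x \<ge> 0"
  shows "(cmod (complex_of_real (real (Ks i) * x) / h i))\<^sup>2 * (\<bar>w\<bar> + \<eta>)\<^sup>2 \<le> P i \<longleftrightarrow> x \<le> b_cand i"
  unfolding b_cand_eq[OF assms(1)]
  using assms Ks_pos h_nonzero P_pos amplitude_pos by (intro power_constraint_iff) (auto simp: less_imp_le)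

lemma \<beta>_cand_eq:
  assumes "i \<in> {1..U}"
  shows "\<beta>_cand k i = (if b_cand k \<le> b_cand i then 1 else 0)"
  unfolding betak_def using power_constraint_iff_le_b_cand[OF assms] by (simp add: bk_def)

lemma feasible3_candidate:
  assumes "k \<in> {1..U}"
  shows "feasible3 U Ks h P w \<eta> (b_cand k) (\<beta>_cand k)"
  unfolding feasible3_def
proof (intro conjI ballI)
  show "b_cand k > 0" using b_cand_pos assms .
next
  fix i assume i: "i \<in> {1..U}"
  show "\<beta>_cand k i \<in> {0, 1}" by (simp add: \<beta>_cand_eq[OF i])
  show "(cmod (complex_of_real (\<beta>_cand k i * real (Ks i) * b_cand k) / h i))\<^sup>2 * (\<bar>w\<bar> + \<eta>)\<^sup>2 \<le> P i"
    using power_constraint_iff_le_b_cand[OF i, of "b_cand k"] b_cand_pos[OF assms] P_pos i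
    by (simp add: \<beta>_cand_eq[OF i] less_imp_le)
qed

lemma feasible3_selected_le_b_cand:
  assumes "feasible3 U Ks h P w \<eta> b \<beta>" "i \<in> {1..U}" "\<beta> i = 1"
  shows "b \<le> b_cand i"
proof -
  have "(cmod (complex_of_real (\<beta> i * real (Ks i) * b) / h i))\<^sup>2 * (\<bar>w\<bar> + \<eta>)\<^sup>2 \<le> P i"
    using assms(1,2) unfolding feasible3_def by blast
  then show ?thesis
    using assms power_constraint_iff_le_b_cand[OF assms(2), of b] unfolding feasible3_def by simp
qed

lemma candidate_dominates:
  assumes "L \<ge> 0" "\<rho>1 \<ge> 0" and feasible: "feasible3 U Ks h P w \<eta> b \<beta>"
  shows "\<exists>k\<in>{1..U}. R3 L \<rho>1 \<sigma> U Ks (b_cand k) (\<beta>_cand k) \<le> R3 L \<rho>1 \<sigma> U Ks b \<beta>"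
proof (cases "\<forall>i\<in>{1..U}. \<beta> i = 0")
  case True
  then show ?thesis using workers by (intro bexI[of _ 1]) (auto simp: R3_def)
next
  case False
  have \<beta>_01: "\<beta> i \<in> {0, 1}" if "i \<in> {1..U}" for i
    using feasible that unfolding feasible3_def by blast
  define J where "J = {i\<in>{1..U}. \<beta> i = 1}"
  have J: "finite J" "J \<noteq> {}" using False \<beta>_01 unfolding J_def by fastforce+
  define k where "k = arg_min_on b_cand J"
  have k: "k \<in> {1..U}" "\<beta> k = 1" using arg_min_if_finite(1)[OF J] unfolding k_def J_def by auto
  have k_least: "b_cand k \<le> b_cand i" if "i \<in> J" for i
    using arg_min_least[OF J that] unfolding k_def .
  have "\<forall>i\<in>{1..U}. 0 \<le> \<beta> i \<and> \<beta> i \<le> \<beta>_cand k i"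
    using \<beta>_01 k_least unfolding J_def by (fastforce simp: \<beta>_cand_eq)
  then have "R3 L \<rho>1 \<sigma> U Ks (b_cand k) (\<beta>_cand k) \<le> R3 L \<rho>1 \<sigma> U Ks b \<beta>"
    using assms Ks_pos feasible3_selected_le_b_cand[OF feasible k] feasible
    by (intro R3_antimono) (auto simp: feasible3_def)
  then show ?thesis using k(1) by blast
qed

end

theorem theorem3:
  fixes U :: nat and Ks :: "nat \<Rightarrow> nat" and h :: "nat \<Rightarrow> complex" and P :: "nat \<Rightarrow> real"
    and w \<eta> L \<rho>1 \<sigma> :: real
  assumes "U \<ge> 1"
    and "\<forall>i\<in>{1..U}. Ks i > 0"
    and "\<forall>i\<in>{1..U}. h i \<noteq> 0"
    and "\<forall>i\<in>{1..U}. P i > 0"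
    and "\<eta> \<ge> 0" and "\<bar>w\<bar> + \<eta> > 0"
    and "L > 0" and "\<rho>1 > 0" and "\<sigma> > 0"
  shows "\<exists>k\<in>{1..U}.
           feasible3 U Ks h P w \<eta> (bk Ks h P w \<eta> k) (betak Ks h P w \<eta> k) \<and>
           (\<forall>b \<beta>. feasible3 U Ks h P w \<eta> b \<beta> \<longrightarrow>
              R3 L \<rho>1 \<sigma> U Ks (bk Ks h P w \<eta> k) (betak Ks h P w \<eta> k) \<le> R3 L \<rho>1 \<sigma> U Ks b \<beta>)"
proof -
  interpret p3_instance U Ks h P w \<eta> using assms by unfold_locales
  define R where "R k = R3 L \<rho>1 \<sigma> U Ks (b_cand k) (\<beta>_cand k)" for k
  have cands: "finite {1..U}" "{1..U} \<noteq> {}" using assms(1) by auto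
  define k where "k = arg_min_on R {1..U}"
  have k: "k \<in> {1..U}" unfolding k_def using arg_min_if_finite(1)[OF cands] .
  have "R k \<le> R3 L \<rho>1 \<sigma> U Ks b \<beta>" if feasible: "feasible3 U Ks h P w \<eta> b \<beta>" for b \<beta>
  proof -
    obtain i where "i \<in> {1..U}" "R i \<le> R3 L \<rho>1 \<sigma> U Ks b \<beta>"
      using candidate_dominates[of L \<rho>1 b \<beta> \<sigma>] feasible assms(7,8) unfolding R_def by fastforce
    then show ?thesis using arg_min_least[OF cands] unfolding k_def by (metis order_trans)
  qed
  then show ?thesis using k feasible3_candidate[OF k] unfolding R_def by blast
qed

end
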